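(* For every alphabet $\Sigma$, $\mathrm{RevL}(\mathbb{F}_2,\Sigma)$ equals the Boolean closure of $\mathrm{RevL}(\mathbb{B},\Sigma)$, i.e., the smallest set of languages over $\Sigma$ containing $\mathrm{RevL}(\mathbb{B},\Sigma)$ and closed under complementation in $\Sigma^*$, finite unions and finite intersections. In other words, the class $\mathrm{RevL}(\mathbb{F}_2)$ is the Boolean closure of $\mathrm{RevL}(\mathbb{B})$.
   Context: $\mathbb{F}_2$ is the two-element field and $\mathbb{B}=(\{0,1\},\lor,\land,0,1)$ the Boolean semiring. For a semiring $S$ and finite nonempty alphabet $\Sigma$, a series is a map $r\colon\Sigma^*\to S$ with value $(r,w)$ and support $\mathrm{supp}(r)=\{w\mid(r,w)\neq0\}$. A weighted automaton over $S$ and $\Sigma$ is $\mathcal{A}=(Q,\sigma,\iota,\tau)$ with $Q$ finite, $\sigma\colon Q\times\Sigma\times Q\to S$, $\iota,\tau\colon Q\to S$; a run on $w=a_1\cdots a_t$ is $q_0a_1q_1\cdots a_tq_t$ with all $\sigma(q_{k-1},a_k,q_k)\neq0$, of weight $\iota(q_0)\sigma(q_0,a_1,q_1)\cdots\sigma(q_{t-1},a_t,q_t)\tau(q_t)$, and $(\|\mathcal{A}\|,w)$ is the sum of weights of all runs on $w$. $\mathcal{A}$ is reversible if for all $p,p',q,q'\in Q$, $a\in\Sigma$: $\sigma(p,a,q)\neq0\neq\sigma(p,a,q')$ implies $q=q'$, and $\sigma(p,a,q)\neq0\neq\sigma(p',a,q)$ implies $p=p'$. $\mathrm{RevL}(S,\Sigma)$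 is the set of supports of series realised by reversible weighted automata over $S$ and $\Sigma$, and $\mathrm{RevL}(S)$ the class of all such languages over all alphabets. $\mathrm{RevL}(\mathbb{B},\Sigma)$ is exactly the set of languages recognised by reversible finite automata in the sense of Pin (transition relation deterministic and codeterministic, arbitrary sets of initial and final states). *)

theory Defs
  imports Main "HOL-Library.Z2"
begin

datatype boolsr = BFalse | BTrue

instantiation boolsr :: comm_semiring_1
begin
definition zero_boolsr :: boolsr where "zero_boolsr = BFalse"
definition one_boolsr :: boolsr where "one_boolsr = BTrue"
fun plus_boolsr :: "boolsr \<Rightarrow> boolsr \<Rightarrow> boolsr" where
  "plus_boolsr BFalse y = y"
| "plus_boolsr BTrue y = BTrue"
fun times_boolsr :: "boolsr \<Rightarrow> boolsr \<Rightarrow> boolsr" where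
  "times_boolsr BFalse y = BFalse"
| "times_boolsr BTrue y = y"
instance
proof
  fix a b c :: boolsr
  show "a + b + c = a + (b + c)" by (cases a; cases b; cases c) auto
  show "a + b = b + a" by (cases a; cases b) auto
  show "0 + a = a" by (simp add: zero_boolsr_def)
  show "a * b * c = a * (b * c)" by (cases a; cases b; cases c) auto
  show "a * b = b * a" by (cases a; cases b) auto
  show "1 * a = a" by (simp add: one_boolsr_def)
  show "(a + b) * c = a * c + b * c" by (cases a; cases b; cases c) auto
  show "0 * a = 0" by (simp add: zero_boolsr_def)
  show "a * 0 = 0" by (cases a) (auto simp: zero_boolsr_def)
  show "(0::boolsr) \<noteq> 1" by (simp add: zero_boolsr_def one_boolsr_def)
qed
end

text \<open>A weighted automaton over semiring 's and alphabet 'a (the alphabet is the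
  whole finite type 'a). The finite state set is a finite set of naturals
  (every finite state set is in bijection with one). The weights of
  sigma, iota, tau outside the state set are irrelevant.\<close>

record ('a, 's) wautomaton =
  states :: "nat set"
  trans  :: "nat \<Rightarrow> 'a \<Rightarrow> nat \<Rightarrow> 's"
  init   :: "nat \<Rightarrow> 's"
  fin    :: "nat \<Rightarrow> 's"

definition wa_ok :: "('a, 's) wautomaton \<Rightarrow> bool" where
  "wa_ok A \<longleftrightarrow> finite (states A)"

definition runs :: "('a, 's::zero) wautomaton \<Rightarrow> 'a list \<Rightarrow> nat list set" where
  "runs A w = {qs. length qs = Suc (length w) \<and> set qs \<subseteq> states A \<and>
      (\<forall>k < length w. trans A (qs ! k) (w ! k) (qs ! Suc k) \<noteq> 0)}"

fun trans_weight :: "('a, 's::semiring_1) wautomaton \<Rightarrow> nat list \<Rightarrow> 'a list \<Rightarrow> 's" where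
  "trans_weight A [q] [] = fin A q"
| "trans_weight A (p # q # qs) (a # w) = trans A p a q * trans_weight A (q # qs) w"
| "trans_weight A _ _ = 0"

definition run_weight :: "('a, 's::semiring_1) wautomaton \<Rightarrow> nat list \<Rightarrow> 'a list \<Rightarrow> 's" where
  "run_weight A qs w = init A (hd qs) * trans_weight A qs w"

definition behaviour :: "('a, 's::semiring_1) wautomaton \<Rightarrow> 'a list \<Rightarrow> 's" where
  "behaviour A w = (\<Sum>qs \<in> runs A w. run_weight A qs w)"

definition supp :: "('a list \<Rightarrow> 's::zero) \<Rightarrow> 'a list set" where
  "supp r = {w. r w \<noteq> 0}"

definition reversible :: "('a, 's::zero) wautomaton \<Rightarrow> bool" where
  "reversible A \<longleftrightarrow>
     (\<forall>p \<in> states A. \<forall>q \<in> states A. \<forall>q' \<in> states A. \<forall>a.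
        trans A p a q \<noteq> 0 \<and> trans A p a q' \<noteq> 0 \<longrightarrow> q = q') \<and>
     (\<forall>p \<in> states A. \<forall>p' \<in> states A. \<forall>q \<in> states A. \<forall>a.
        trans A p a q \<noteq> 0 \<and> trans A p' a q \<noteq> 0 \<longrightarrow> p = p')"

text \<open>RevL(S, Sigma), where Sigma = UNIV :: 'a set and S is the type 's.\<close>

definition RevL :: "'s::semiring_1 itself \<Rightarrow> 'a list set set" where
  "RevL _ = {supp (behaviour A) | A :: ('a, 's) wautomaton. wa_ok A \<and> reversible A}"

definition bool_closed :: "'a list set set \<Rightarrow> bool" where
  "bool_closed C \<longleftrightarrow>
     (\<forall>L \<in> C. - L \<in> C) \<and>
     (\<forall>F. finite F \<and> F \<subseteq> C \<longrightarrow> \<Union>F \<in> C) \<and>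
     (\<forall>F. finite F \<and> F \<subseteq> C \<longrightarrow> \<Inter>F \<in> C)"

definition bool_closure :: "'a list set set \<Rightarrow> 'a list set set" where
  "bool_closure K = \<Inter>{C. K \<subseteq> C \<and> bool_closed C}"

end

(* Over F2 and over B every weight is 0 or 1, so the behaviour of an automaton on w is the
   number of its accepting runs on w, read modulo 2 over F2 and tested for being nonzero over B.
   A reversible automaton is deterministic, so a run is determined by its first state. Writing
   L_q for the language accepted from an initial state q, a reversible F2-automaton therefore
   recognises the set of words lying in an odd number of the L_q, and a reversible B-automaton
   the union of the L_q; every L_q is recognised by a reversible automaton over either semiring.
   Parity sets of finitely many languages are Boolean combinations of them, which gives
   RevL(F2) within the Boolean closure of RevL(B). Conversely RevL(F2) is Boolean closed: a fresh
   looping state that is initial and final adds one accepting run on every word, which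
   complements the support, and the product automaton multiplies the numbers of accepting runs,
   which intersects the supports. *)

theory Submission
  imports Defs "HOL-Library.Nat_Bijection"
begin

lemma length_run: "qs \<in> runs A w \<Longrightarrow> length qs = Suc (length w)"
  by (simp add: runs_def)

lemma Nil_notin_runs [simp]: "[] \<notin> runs A w"
  by (simp add: runs_def)

lemma hd_run_in_states: "qs \<in> runs A w \<Longrightarrow> hd qs \<in> states A"
  by (cases qs) (auto simp: runs_def)

lemma last_run_in_states: "qs \<in> runs A w \<Longrightarrow> last qs \<in> states A"
  by (cases qs rule: rev_cases) (auto simp: runs_def)

lemma finite_runs: "finite (states A) \<Longrightarrow> finite (runs A w)"
  by (rule finite_subset[OF _ finite_lists_length_eq[of "states A" "Suc (length w)"]])
    (auto simp: runs_def)

lemma runs_Nil: "qs \<in> runs A [] \<longleftrightarrow> (\<exists>q \<in> states A. qs = [q])"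
  by (auto simp: runs_def length_Suc_conv)

lemma runs_Cons:
  "qs \<in> runs A (a # w) \<longleftrightarrow>
     (\<exists>p qs'. qs = p # qs' \<and> p \<in> states A \<and> trans A p a (hd qs') \<noteq> 0 \<and> qs' \<in> runs A w)"
proof (cases qs)
  case (Cons p qs')
  have "length qs' = Suc (length w) \<Longrightarrow> hd qs' = qs' ! 0" by (cases qs') auto
  then show ?thesis
    by (auto simp: Cons runs_def less_Suc_eq_0_disj)
qed (simp add: runs_def)

lemma Cons_in_runs_Cons:
  "p # qs \<in> runs A (a # w) \<longleftrightarrow> p \<in> states A \<and> trans A p a (hd qs) \<noteq> 0 \<and> qs \<in> runs A w"
  by (simp add: runs_Cons)

section \<open>Semirings whose only elements are 0 and 1\<close>

lemma trans_weight_zero_one: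
  fixes A :: "('a, 's::semiring_1) wautomaton"
  assumes zero_one: "\<And>x::'s. x = 0 \<or> x = 1" and "qs \<in> runs A w"
  shows "trans_weight A qs w = fin A (last qs)"
  using assms(2)
proof (induction w arbitrary: qs)
  case Nil
  then show ?case by (auto simp: runs_Nil)
next
  case (Cons a w)
  then obtain p r where "qs = p # r" "trans A p a (hd r) \<noteq> 0" "r \<in> runs A w"
    by (auto simp: runs_Cons)
  moreover obtain q qs' where "r = q # qs'"
    using \<open>r \<in> runs A w\<close> by (cases r) auto
  ultimately have qs: "qs = p # q # qs'" and "trans A p a q \<noteq> 0" and run: "q # qs' \<in> runs A w"
    by simp_all
  then have "trans A p a q = 1" using zero_one by blast
  with Cons.IH[OF run] show ?case by (simp add: qs)
qed

definition acc_runs :: "('a, 's::zero) wautomaton \<Rightarrow> 'a list \<Rightarrow> nat list set" where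
  "acc_runs A w = {qs \<in> runs A w. init A (hd qs) \<noteq> 0 \<and> fin A (last qs) \<noteq> 0}"

lemma behaviour_zero_one:
  fixes A :: "('a, 's::semiring_1) wautomaton"
  assumes zero_one: "\<And>x::'s. x = 0 \<or> x = 1" and "finite (states A)"
  shows "behaviour A w = of_nat (card (acc_runs A w))"
proof -
  have "run_weight A qs w = of_bool (init A (hd qs) \<noteq> 0 \<and> fin A (last qs) \<noteq> 0)"
    if "qs \<in> runs A w" for qs
    using zero_one[of "init A (hd qs)"] zero_one[of "fin A (last qs)"]
    by (auto simp: run_weight_def trans_weight_zero_one[OF zero_one that])
  then have "behaviour A w = (\<Sum>qs \<in> runs A w. of_bool (init A (hd qs) \<noteq> 0 \<and> fin A (last qs) \<noteq> 0))"
    unfolding behaviour_def by (rule sum.cong[OF refl])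
  also have "\<dots> = of_nat (card (acc_runs A w))"
    using finite_runs[OF assms(2)] by (simp add: acc_runs_def Collect_conj_eq)
  finally show ?thesis .
qed

lemma zero_one_bit: "(x::bit) = 0 \<or> x = 1"
  by (cases x) simp_all

lemma zero_one_boolsr: "(x::boolsr) = 0 \<or> x = 1"
  by (cases x) (simp_all add: zero_boolsr_def one_boolsr_def)

lemma of_nat_bit_eq_0_iff: "(of_nat n :: bit) = 0 \<longleftrightarrow> even n"
  by (metis even_of_nat_iff odd_one zero_one_bit even_zero)

lemma of_nat_boolsr_eq_0_iff: "(of_nat n :: boolsr) = 0 \<longleftrightarrow> n = 0"
  by (induction n) (simp_all add: zero_boolsr_def one_boolsr_def)

lemma finite_acc_runs: "finite (states A) \<Longrightarrow> finite (acc_runs A w)"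
  unfolding acc_runs_def by (simp add: finite_runs)

lemma supp_behaviour_bit:
  fixes A :: "('a, bit) wautomaton"
  assumes "finite (states A)"
  shows "supp (behaviour A) = {w. odd (card (acc_runs A w))}"
  by (simp add: supp_def behaviour_zero_one[OF zero_one_bit assms] of_nat_bit_eq_0_iff)

section \<open>Reversible automata\<close>

lemma reversible_target_eq:
  assumes "reversible A" and "p \<in> states A" "q \<in> states A" "q' \<in> states A"
    and "trans A p a q \<noteq> 0" "trans A p a q' \<noteq> 0"
  shows "q = q'"
  using assms unfolding reversible_def by auto

lemma reversible_source_eq:
  assumes "reversible A" and "p \<in> states A" "p' \<in> states A" "q \<in> states A"
    and "trans A p a q \<noteq> 0" "trans A p' a q \<noteq> 0"
  shows "p = p'"
  using assms unfolding reversible_def by blast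

lemma reversible_runs_eqI:
  assumes "reversible A" and "qs \<in> runs A w" "qs' \<in> runs A w" and "hd qs = hd qs'"
  shows "qs = qs'"
  using assms(2-)
proof (induction w arbitrary: qs qs')
  case Nil
  then show ?case by (auto simp: runs_Nil)
next
  case (Cons a w)
  then obtain p r r' where qs: "qs = p # r" "qs' = p # r'" and p: "p \<in> states A"
    and t: "trans A p a (hd r) \<noteq> 0" "trans A p a (hd r') \<noteq> 0" and runs: "r \<in> runs A w" "r' \<in> runs A w"
    by (auto simp: runs_Cons)
  have "hd r \<in> states A" "hd r' \<in> states A"
    using runs by (simp_all add: hd_run_in_states)
  then have "hd r = hd r'" using reversible_target_eq[OF assms(1) p _ _ t] by blast
  then show ?case using Cons.IH[OF runs] qs by simp
qed

definition initial_states :: "('a, 's::zero) wautomaton \<Rightarrow> nat set" where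
  "initial_states A = {q \<in> states A. init A q \<noteq> 0}"

lemma finite_initial_states: "finite (states A) \<Longrightarrow> finite (initial_states A)"
  by (simp add: initial_states_def)

definition lang_from :: "('a, 's::zero) wautomaton \<Rightarrow> nat \<Rightarrow> 'a list set" where
  "lang_from A q = {w. \<exists>qs \<in> runs A w. hd qs = q \<and> fin A (last qs) \<noteq> 0}"

lemma card_acc_runs_reversible:
  assumes "reversible A" and "finite (states A)"
  shows "card (acc_runs A w) = card {q \<in> initial_states A. w \<in> lang_from A q}"
proof -
  have inj: "inj_on hd (acc_runs A w)"
  proof (rule inj_onI)
    fix qs qs' assume "qs \<in> acc_runs A w" "qs' \<in> acc_runs A w" and "hd qs = hd qs'"
    then have "qs \<in> runs A w" "qs' \<in> runs A w" by (simp_all add: acc_runs_def)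
    then show "qs = qs'" using \<open>hd qs = hd qs'\<close> by (rule reversible_runs_eqI[OF assms(1)])
  qed
  have image: "hd ` acc_runs A w = {q \<in> initial_states A. w \<in> lang_from A q}"
  proof (intro set_eqI iffI)
    fix q assume "q \<in> hd ` acc_runs A w"
    then obtain qs where "qs \<in> runs A w" "init A (hd qs) \<noteq> 0" "fin A (last qs) \<noteq> 0" "q = hd qs"
      by (auto simp: acc_runs_def)
    then show "q \<in> {q \<in> initial_states A. w \<in> lang_from A q}"
      by (auto simp: initial_states_def lang_from_def hd_run_in_states)
  next
    fix q assume "q \<in> {q \<in> initial_states A. w \<in> lang_from A q}"
    then obtain qs where "qs \<in> runs A w" "init A q \<noteq> 0" "fin A (last qs) \<noteq> 0" "q = hd qs"
      by (auto simp: initial_states_def lang_from_def)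
    then show "q \<in> hd ` acc_runs A w"
      by (auto simp: acc_runs_def)
  qed
  from card_image[OF inj] show ?thesis unfolding image by (rule sym)
qed

lemma supp_reversible_bit:
  fixes A :: "('a, bit) wautomaton"
  assumes "reversible A" and "finite (states A)"
  shows "supp (behaviour A) = {w. odd (card {q \<in> initial_states A. w \<in> lang_from A q})}"
  by (simp add: supp_behaviour_bit[OF assms(2)] card_acc_runs_reversible[OF assms])

lemma supp_reversible_boolsr:
  fixes A :: "('a, boolsr) wautomaton"
  assumes "reversible A" and "finite (states A)"
  shows "supp (behaviour A) = (\<Union>q \<in> initial_states A. lang_from A q)"
  using finite_initial_states[OF assms(2)]
  by (auto simp: supp_def behaviour_zero_one[OF zero_one_boolsr assms(2)]
      card_acc_runs_reversible[OF assms] of_nat_boolsr_eq_0_iff)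

definition start_at :: "('a, 's::zero) wautomaton \<Rightarrow> nat \<Rightarrow> ('a, 't::zero_neq_one) wautomaton" where
  "start_at A q = \<lparr>states = states A, trans = \<lambda>p a p'. of_bool (trans A p a p' \<noteq> 0),
     init = \<lambda>p. of_bool (p = q), fin = \<lambda>p. of_bool (fin A p \<noteq> 0)\<rparr>"

lemma states_start_at [simp]: "states (start_at A q) = states A"
  by (simp add: start_at_def)

lemma runs_start_at [simp]: "runs (start_at A q) w = runs A w"
  by (simp add: runs_def start_at_def)

lemma reversible_start_at [simp]: "reversible (start_at A q) \<longleftrightarrow> reversible A"
  by (simp add: reversible_def start_at_def)

lemma acc_runs_start_at: "acc_runs (start_at A q) w = {qs \<in> runs A w. hd qs = q \<and> fin A (last qs) \<noteq> 0}"
  unfolding acc_runs_def runs_start_at by (simp add: start_at_def)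

lemma lang_from_in_RevL:
  assumes zero_one: "\<And>x::'s::semiring_1. x = 0 \<or> x = 1"
    and "reversible A" and "wa_ok A"
  shows "lang_from A q \<in> RevL TYPE('s)"
proof -
  let ?B = "start_at A q :: ('a, 's) wautomaton"
  have fin: "finite (states ?B)" using assms(3) by (simp add: wa_ok_def)
  have "w \<in> supp (behaviour ?B) \<longleftrightarrow> acc_runs ?B w \<noteq> {}" for w
  proof -
    have "qs = qs'" if "qs \<in> acc_runs ?B w" "qs' \<in> acc_runs ?B w" for qs qs'
      using that reversible_runs_eqI[OF assms(2), of qs w qs'] by (simp add: acc_runs_start_at)
    then have "card (acc_runs ?B w) \<le> 1"
      by (simp add: card_le_Suc0_iff_eq finite_acc_runs[OF fin])
    then have "card (acc_runs ?B w) = of_bool (acc_runs ?B w \<noteq> {})"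
      using finite_acc_runs[OF fin, of w] by (auto simp: le_Suc_eq)
    then show ?thesis
      by (simp add: supp_def behaviour_zero_one[OF zero_one fin])
  qed
  then have "supp (behaviour ?B) = lang_from A q"
    by (auto simp: lang_from_def acc_runs_start_at)
  moreover have "wa_ok ?B \<and> reversible ?B" using assms(2,3) by (simp add: wa_ok_def)
  ultimately show ?thesis unfolding RevL_def by blast
qed

section \<open>Boolean operations on reversible automata over F2\<close>

definition add_loop_state :: "('a, 's::zero_neq_one) wautomaton \<Rightarrow> nat \<Rightarrow> ('a, 's) wautomaton" where
  "add_loop_state A z = \<lparr>states = insert z (states A),
     trans = \<lambda>p a q. if p = z \<or> q = z then of_bool (p = q) else trans A p a q,
     init = (init A)(z := 1), fin = (fin A)(z := 1)\<rparr>"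

lemma states_add_loop_state [simp]: "states (add_loop_state A z) = insert z (states A)"
  by (simp add: add_loop_state_def)

lemma trans_add_loop_state [simp]:
  "trans (add_loop_state A z) p a q \<noteq> 0 \<longleftrightarrow> (if p = z \<or> q = z then p = q else trans A p a q \<noteq> 0)"
  by (simp add: add_loop_state_def)

lemma init_add_loop_state [simp]: "init (add_loop_state A z) = (init A)(z := 1)"
  by (simp add: add_loop_state_def)

lemma fin_add_loop_state [simp]: "fin (add_loop_state A z) = (fin A)(z := 1)"
  by (simp add: add_loop_state_def)

lemma runs_add_loop_state:
  assumes "z \<notin> states A"
  shows "runs (add_loop_state A z) w = insert (replicate (Suc (length w)) z) (runs A w)"
proof (induction w)
  case Nil
  show ?case by (auto simp: runs_Nil)
next
  case (Cons a w)
  let ?loop = "replicate (Suc (length w)) z"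
  have Cons_iff: "p # qs \<in> runs (add_loop_state A z) (a # w) \<longleftrightarrow>
      p # qs \<in> insert (z # ?loop) (runs A (a # w))" for p qs
  proof (cases "qs = ?loop")
    case True
    then have "qs \<notin> runs A w" using hd_run_in_states assms by fastforce
    with True show ?thesis by (auto simp: Cons_in_runs_Cons Cons.IH)
  next
    case False
    show ?thesis
    proof (cases "qs \<in> runs A w")
      case True
      then have "hd qs \<noteq> z" using hd_run_in_states assms by blast
      with True False assms show ?thesis by (auto simp: Cons_in_runs_Cons Cons.IH)
    qed (use False in \<open>simp add: Cons_in_runs_Cons Cons.IH\<close>)
  qed
  show ?case
  proof (rule set_eqI)
    fix qs
    show "qs \<in> runs (add_loop_state A z) (a # w) \<longleftrightarrow>
        qs \<in> insert (replicate (Suc (length (a # w))) z) (runs A (a # w))"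
      using Cons_iff by (cases qs) simp_all
  qed
qed

lemma acc_runs_add_loop_state:
  assumes "z \<notin> states A"
  shows "acc_runs (add_loop_state A z) w = insert (replicate (Suc (length w)) z) (acc_runs A w)"
proof -
  have "hd qs \<noteq> z \<and> last qs \<noteq> z" if "qs \<in> runs A w" for qs
    using hd_run_in_states[OF that] last_run_in_states[OF that] assms by blast
  then show ?thesis
    unfolding acc_runs_def runs_add_loop_state[OF assms] by (auto split: if_splits)
qed

lemma reversible_add_loop_state:
  assumes "reversible A"
  shows "reversible (add_loop_state A z)"
  unfolding reversible_def
proof (intro conjI ballI allI impI)
  fix p q q' a
  assume "p \<in> states (add_loop_state A z)" "q \<in> states (add_loop_state A z)"
    "q' \<in> states (add_loop_state A z)"
    and "trans (add_loop_state A z) p a q \<noteq> 0 \<and> trans (add_loop_state A z) p a q' \<noteq> 0"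
  then show "q = q'"
    using reversible_target_eq[OF assms, of p q q' a] by (auto split: if_splits)
next
  fix p p' q a
  assume "p \<in> states (add_loop_state A z)" "p' \<in> states (add_loop_state A z)"
    "q \<in> states (add_loop_state A z)"
    and "trans (add_loop_state A z) p a q \<noteq> 0 \<and> trans (add_loop_state A z) p' a q \<noteq> 0"
  then show "p = p'"
    using reversible_source_eq[OF assms, of p p' q a] by (auto split: if_splits)
qed

definition prod_automaton :: "('a, 's::zero_neq_one) wautomaton \<Rightarrow> ('a, 's) wautomaton \<Rightarrow> ('a, 's) wautomaton" where
  "prod_automaton A B = \<lparr>states = {r. prod_decode r \<in> states A \<times> states B},
     trans = \<lambda>r a r'. of_bool (trans A (fst (prod_decode r)) a (fst (prod_decode r')) \<noteq> 0 \<and>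
                              trans B (snd (prod_decode r)) a (snd (prod_decode r')) \<noteq> 0),
     init = \<lambda>r. of_bool (init A (fst (prod_decode r)) \<noteq> 0 \<and> init B (snd (prod_decode r)) \<noteq> 0),
     fin = \<lambda>r. of_bool (fin A (fst (prod_decode r)) \<noteq> 0 \<and> fin B (snd (prod_decode r)) \<noteq> 0)\<rparr>"

lemma states_prod_automaton [simp]:
  "r \<in> states (prod_automaton A B) \<longleftrightarrow> prod_decode r \<in> states A \<times> states B"
  by (simp add: prod_automaton_def)

lemma trans_prod_automaton [simp]:
  "trans (prod_automaton A B) r a r' \<noteq> 0 \<longleftrightarrow>
     trans A (fst (prod_decode r)) a (fst (prod_decode r')) \<noteq> 0 \<and>
     trans B (snd (prod_decode r)) a (snd (prod_decode r')) \<noteq> 0"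
  by (simp add: prod_automaton_def)

lemma init_prod_automaton [simp]:
  "init (prod_automaton A B) r \<noteq> 0 \<longleftrightarrow>
     init A (fst (prod_decode r)) \<noteq> 0 \<and> init B (snd (prod_decode r)) \<noteq> 0"
  by (simp add: prod_automaton_def)

lemma fin_prod_automaton [simp]:
  "fin (prod_automaton A B) r \<noteq> 0 \<longleftrightarrow>
     fin A (fst (prod_decode r)) \<noteq> 0 \<and> fin B (snd (prod_decode r)) \<noteq> 0"
  by (simp add: prod_automaton_def)

lemma runs_prod_automaton:
  "rs \<in> runs (prod_automaton A B) w \<longleftrightarrow>
     map (fst \<circ> prod_decode) rs \<in> runs A w \<and> map (snd \<circ> prod_decode) rs \<in> runs B w"
proof (induction w arbitrary: rs)
  case Nil
  show ?case by (cases rs) (auto simp: runs_Nil mem_Times_iff)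
next
  case (Cons a w)
  note IH = Cons.IH
  show ?case
  proof (cases rs)
    case (Cons r rs')
    show ?thesis
    proof (cases "rs' = []")
      case False
      then show ?thesis
        unfolding Cons list.map Cons_in_runs_Cons IH states_prod_automaton trans_prod_automaton
        by (simp add: hd_map mem_Times_iff) blast
    qed (simp add: Cons Cons_in_runs_Cons)
  qed simp
qed

lemma acc_runs_prod_automaton:
  "rs \<in> acc_runs (prod_automaton A B) w \<longleftrightarrow>
     map (fst \<circ> prod_decode) rs \<in> acc_runs A w \<and> map (snd \<circ> prod_decode) rs \<in> acc_runs B w"
proof (cases "rs = []")
  case False
  then show ?thesis by (auto simp: acc_runs_def runs_prod_automaton hd_map last_map)
qed (simp add: acc_runs_def)

lemma card_acc_runs_prod_automaton:
  "card (acc_runs (prod_automaton A B) w) = card (acc_runs A w) * card (acc_runs B w)"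
proof -
  define unpair :: "nat list \<Rightarrow> nat list \<times> nat list" where
    "unpair rs = (map (fst \<circ> prod_decode) rs, map (snd \<circ> prod_decode) rs)" for rs
  define pair :: "nat list \<times> nat list \<Rightarrow> nat list" where
    "pair pq = map prod_encode (zip (fst pq) (snd pq))" for pq
  have pair_unpair: "pair (unpair rs) = rs" for rs
    unfolding pair_def unpair_def by (induction rs) auto
  have unpair_pair: "unpair (pair (ps, qs)) = (ps, qs)" if "length ps = length qs" for ps qs
    using that by (simp add: pair_def unpair_def comp_def)
  have acc_iff: "rs \<in> acc_runs (prod_automaton A B) w \<longleftrightarrow> unpair rs \<in> acc_runs A w \<times> acc_runs B w" for rs
    by (simp add: unpair_def acc_runs_prod_automaton)
  have "bij_betw unpair (acc_runs (prod_automaton A B) w) (acc_runs A w \<times> acc_runs B w)"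
  proof (rule bij_betw_byWitness[where f' = pair])
    show "\<forall>rs \<in> acc_runs (prod_automaton A B) w. pair (unpair rs) = rs"
      by (simp add: pair_unpair)
    show "\<forall>pq \<in> acc_runs A w \<times> acc_runs B w. unpair (pair pq) = pq"
      by (auto simp: acc_runs_def unpair_pair dest!: length_run)
    then show "pair ` (acc_runs A w \<times> acc_runs B w) \<subseteq> acc_runs (prod_automaton A B) w"
      by (auto simp: acc_iff)
  qed (auto simp: acc_iff)
  then show ?thesis
    by (simp add: bij_betw_same_card card_cartesian_product)
qed

lemma reversible_prod_automaton:
  assumes "reversible A" "reversible B"
  shows "reversible (prod_automaton A B)"
  unfolding reversible_def
proof (intro conjI ballI allI impI)
  fix p q q' a
  assume "p \<in> states (prod_automaton A B)" "q \<in> states (prod_automaton A B)"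
    "q' \<in> states (prod_automaton A B)"
    and "trans (prod_automaton A B) p a q \<noteq> 0 \<and> trans (prod_automaton A B) p a q' \<noteq> 0"
  then have "fst (prod_decode q) = fst (prod_decode q')" "snd (prod_decode q) = snd (prod_decode q')"
    by (auto simp: mem_Times_iff intro: reversible_target_eq[OF assms(1)] reversible_target_eq[OF assms(2)])
  then have "prod_decode q = prod_decode q'" by (simp add: prod_eq_iff)
  then show "q = q'" by simp
next
  fix p p' q a
  assume "p \<in> states (prod_automaton A B)" "p' \<in> states (prod_automaton A B)"
    "q \<in> states (prod_automaton A B)"
    and "trans (prod_automaton A B) p a q \<noteq> 0 \<and> trans (prod_automaton A B) p' a q \<noteq> 0"
  then have "fst (prod_decode p) = fst (prod_decode p')" "snd (prod_decode p) = snd (prod_decode p')"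
    by (auto simp: mem_Times_iff intro: reversible_source_eq[OF assms(1)] reversible_source_eq[OF assms(2)])
  then have "prod_decode p = prod_decode p'" by (simp add: prod_eq_iff)
  then show "p = p'" by simp
qed

lemma empty_in_RevL: "{} \<in> RevL TYPE('s::semiring_1)"
proof -
  let ?A = "\<lparr>states = {}, trans = \<lambda>_ _ _. 0, init = \<lambda>_. 0, fin = \<lambda>_. 0\<rparr> :: ('a, 's) wautomaton"
  have "runs ?A w = {}" for w
    using hd_run_in_states[of _ ?A w] by auto
  then have "supp (behaviour ?A) = {}" by (simp add: supp_def behaviour_def)
  moreover have "wa_ok ?A \<and> reversible ?A" by (simp add: wa_ok_def reversible_def)
  ultimately show ?thesis unfolding RevL_def by blast
qed

lemma Compl_in_RevL_bit:
  assumes "L \<in> RevL TYPE(bit)"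
  shows "- L \<in> RevL TYPE(bit)"
proof -
  obtain A :: "('a, bit) wautomaton" where A: "finite (states A)" "reversible A"
    and L: "L = supp (behaviour A)"
    using assms unfolding RevL_def wa_ok_def by blast
  obtain z where z: "z \<notin> states A"
    using A(1) infinite_UNIV_nat ex_new_if_finite by blast
  let ?B = "add_loop_state A z"
  have "card (acc_runs ?B w) = Suc (card (acc_runs A w))" for w
  proof -
    have "replicate (Suc (length w)) z \<notin> acc_runs A w"
      using z hd_run_in_states by (fastforce simp: acc_runs_def)
    then show ?thesis
      by (simp add: acc_runs_add_loop_state[OF z] finite_acc_runs[OF A(1)])
  qed
  then have "supp (behaviour ?B) = - L"
    using A(1) by (auto simp: L supp_behaviour_bit)
  moreover have "wa_ok ?B \<and> reversible ?B"
    using A by (simp add: wa_ok_def reversible_add_loop_state)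
  ultimately show ?thesis unfolding RevL_def by blast
qed

lemma Int_in_RevL_bit:
  assumes "L \<in> RevL TYPE(bit)" "M \<in> RevL TYPE(bit)"
  shows "L \<inter> M \<in> RevL TYPE(bit)"
proof -
  obtain A :: "('a, bit) wautomaton" where A: "finite (states A)" "reversible A"
    and L: "L = supp (behaviour A)"
    using assms(1) unfolding RevL_def wa_ok_def by blast
  obtain B :: "('a, bit) wautomaton" where B: "finite (states B)" "reversible B"
    and M: "M = supp (behaviour B)"
    using assms(2) unfolding RevL_def wa_ok_def by blast
  let ?P = "prod_automaton A B"
  have fin: "finite (states ?P)"
  proof -
    have "states ?P = prod_decode -` (states A \<times> states B)" by auto
    then show ?thesis
      using A(1) B(1) by (simp add: finite_vimageI inj_prod_decode)
  qed
  have "supp (behaviour ?P) = L \<inter> M"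
    by (simp add: L M supp_behaviour_bit A(1) B(1) fin card_acc_runs_prod_automaton Collect_conj_eq)
  moreover have "wa_ok ?P \<and> reversible ?P"
    using A B fin by (simp add: wa_ok_def reversible_prod_automaton)
  ultimately show ?thesis unfolding RevL_def by blast
qed

section \<open>Boolean closure\<close>

lemma bool_closed_Compl: "bool_closed C \<Longrightarrow> L \<in> C \<Longrightarrow> - L \<in> C"
  unfolding bool_closed_def by blast

lemma bool_closed_Un:
  assumes "bool_closed C" "L \<in> C" "M \<in> C"
  shows "L \<union> M \<in> C"
proof -
  have "finite {L, M}" "{L, M} \<subseteq> C" using assms by auto
  then have "\<Union>{L, M} \<in> C" using assms(1) unfolding bool_closed_def by blast
  then show ?thesis by simp
qed

lemma bool_closed_Diff:
  assumes "bool_closed C" "L \<in> C" "M \<in> C"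
  shows "L - M \<in> C"
proof -
  have "finite {L, - M}" "{L, - M} \<subseteq> C" using assms bool_closed_Compl[OF assms(1,3)] by auto
  then have "\<Inter>{L, - M} \<in> C" using assms(1) unfolding bool_closed_def by blast
  then show ?thesis by (simp add: Diff_eq)
qed

lemma bool_closedI:
  assumes empty: "{} \<in> C" and Compl: "\<And>L. L \<in> C \<Longrightarrow> - L \<in> C"
    and Int: "\<And>L M. L \<in> C \<Longrightarrow> M \<in> C \<Longrightarrow> L \<inter> M \<in> C"
  shows "bool_closed C"
proof -
  have Inter: "\<Inter>F \<in> C" if "finite F" "F \<subseteq> C" for F
    using that
  proof (induction F rule: finite_induct)
    case empty
    show ?case using Compl[OF assms(1)] by simp
  next
    case (insert L F)
    then show ?case using Int by simp
  qed
  have "\<Union>F \<in> C" if "finite F" "F \<subseteq> C" for F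
  proof -
    have "\<Inter>(uminus ` F) \<in> C" using that Compl by (intro Inter) auto
    then have "- \<Inter>(uminus ` F) \<in> C" by (rule Compl)
    then show ?thesis by (simp add: uminus_Inf image_image)
  qed
  with Inter Compl show ?thesis unfolding bool_closed_def by blast
qed

lemma bool_closed_UN:
  assumes "bool_closed C" "finite J" "\<And>j. j \<in> J \<Longrightarrow> L j \<in> C"
  shows "(\<Union>j \<in> J. L j) \<in> C"
  using assms unfolding bool_closed_def by blast

lemma bool_closed_odd_card:
  assumes C: "bool_closed C" and "finite J" "\<And>j. j \<in> J \<Longrightarrow> L j \<in> C"
  shows "{w. odd (card {j \<in> J. w \<in> L j})} \<in> C"
  using assms(2,3)
proof (induction J rule: finite_induct)
  case empty
  show ?case using bool_closed_UN[OF C, of "{}"] by simp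
next
  case (insert i J)
  let ?S = "{w. odd (card {j \<in> J. w \<in> L j})}"
  have card_insert: "card {j \<in> insert i J. w \<in> L j} =
      (if w \<in> L i then Suc (card {j \<in> J. w \<in> L j}) else card {j \<in> J. w \<in> L j})" for w
  proof -
    have "{j \<in> insert i J. w \<in> L j} = (if w \<in> L i then insert i {j \<in> J. w \<in> L j} else {j \<in> J. w \<in> L j})"
      by auto
    then show ?thesis using insert.hyps by simp
  qed
  have "{w. odd (card {j \<in> insert i J. w \<in> L j})} = (?S - L i) \<union> (L i - ?S)"
  proof (rule set_eqI)
    fix w show "w \<in> {w. odd (card {j \<in> insert i J. w \<in> L j})} \<longleftrightarrow> w \<in> (?S - L i) \<union> (L i - ?S)"
      unfolding Un_iff Diff_iff mem_Collect_eq card_insert by simp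
  qed
  moreover have "?S \<in> C" "L i \<in> C" using insert by simp_all
  then have "(?S - L i) \<union> (L i - ?S) \<in> C"
    by (intro bool_closed_Un bool_closed_Diff C)
  ultimately show ?case by simp
qed

lemma subset_bool_closure: "K \<subseteq> bool_closure K"
  unfolding bool_closure_def by blast

lemma bool_closure_least: "K \<subseteq> C \<Longrightarrow> bool_closed C \<Longrightarrow> bool_closure K \<subseteq> C"
  unfolding bool_closure_def by blast

lemma mem_bool_closureI: "(\<And>C. K \<subseteq> C \<Longrightarrow> bool_closed C \<Longrightarrow> L \<in> C) \<Longrightarrow> L \<in> bool_closure K"
  unfolding bool_closure_def by blast

lemma bool_closed_bool_closure: "bool_closed (bool_closure K)"
  unfolding bool_closed_def[of "bool_closure K"]
proof (intro conjI allI impI ballI)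
  fix L assume L: "L \<in> bool_closure K"
  show "- L \<in> bool_closure K"
  proof (rule mem_bool_closureI)
    fix C assume "K \<subseteq> C" "bool_closed C"
    then have "L \<in> C" using L bool_closure_least by blast
    with \<open>bool_closed C\<close> show "- L \<in> C" by (rule bool_closed_Compl)
  qed
next
  fix F assume F: "finite F \<and> F \<subseteq> bool_closure K"
  show "\<Union>F \<in> bool_closure K"
  proof (rule mem_bool_closureI)
    fix C assume "K \<subseteq> C" "bool_closed C"
    then have "F \<subseteq> C" using F bool_closure_least by blast
    with F \<open>bool_closed C\<close> show "\<Union>F \<in> C" unfolding bool_closed_def by blast
  qed
next
  fix F assume F: "finite F \<and> F \<subseteq> bool_closure K"
  show "\<Inter>F \<in> bool_closure K"
  proof (rule mem_bool_closureI)
    fix C assume "K \<subseteq> C" "bool_closed C"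
    then have "F \<subseteq> C" using F bool_closure_least by blast
    with F \<open>bool_closed C\<close> show "\<Inter>F \<in> C" unfolding bool_closed_def by blast
  qed
qed

lemma bool_closed_RevL_bit: "bool_closed (RevL TYPE(bit))"
  by (rule bool_closedI) (simp_all add: empty_in_RevL Compl_in_RevL_bit Int_in_RevL_bit)

lemma RevL_boolsr_subset_RevL_bit: "(RevL TYPE(boolsr) :: 'a list set set) \<subseteq> RevL TYPE(bit)"
proof
  fix L :: "'a list set" assume "L \<in> RevL TYPE(boolsr)"
  then obtain A :: "('a, boolsr) wautomaton" where fin: "finite (states A)" and rev: "reversible A"
    and L: "L = supp (behaviour A)"
    unfolding RevL_def wa_ok_def by blast
  have "L = (\<Union>q \<in> initial_states A. lang_from A q)"
    unfolding L by (rule supp_reversible_boolsr[OF rev fin])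
  also have "\<dots> \<in> RevL TYPE(bit)"
  proof (rule bool_closed_UN[OF bool_closed_RevL_bit])
    show "finite (initial_states A)" using fin by (rule finite_initial_states)
    show "lang_from A q \<in> RevL TYPE(bit)" for q
      using lang_from_in_RevL[OF zero_one_bit rev] fin by (simp add: wa_ok_def)
  qed
  finally show "L \<in> RevL TYPE(bit)" .
qed

lemma RevL_bit_subset_bool_closure:
  "(RevL TYPE(bit) :: 'a list set set) \<subseteq> bool_closure (RevL TYPE(boolsr))"
proof
  fix L :: "'a list set" assume "L \<in> RevL TYPE(bit)"
  then obtain A :: "('a, bit) wautomaton" where fin: "finite (states A)" and rev: "reversible A"
    and L: "L = supp (behaviour A)"
    unfolding RevL_def wa_ok_def by blast
  have "L = {w. odd (card {q \<in> initial_states A. w \<in> lang_from A q})}"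
    unfolding L by (rule supp_reversible_bit[OF rev fin])
  also have "\<dots> \<in> bool_closure (RevL TYPE(boolsr))"
  proof (rule bool_closed_odd_card[OF bool_closed_bool_closure])
    show "finite (initial_states A)" using fin by (rule finite_initial_states)
    show "lang_from A q \<in> bool_closure (RevL TYPE(boolsr))" for q
      using lang_from_in_RevL[OF zero_one_boolsr rev] fin subset_bool_closure
      by (auto simp: wa_ok_def)
  qed
  finally show "L \<in> bool_closure (RevL TYPE(boolsr))" .
qed

theorem theorem1:
  "RevL TYPE(bit) = bool_closure (RevL TYPE(boolsr) :: ('a::finite) list set set)"
proof (rule antisym)
  show "RevL TYPE(bit) \<subseteq> bool_closure (RevL TYPE(boolsr) :: 'a list set set)"
    by (rule RevL_bit_subset_bool_closure)
  show "bool_closure (RevL TYPE(boolsr)) \<subseteq> (RevL TYPE(bit) :: 'a list set set)"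
    using RevL_boolsr_subset_RevL_bit bool_closed_RevL_bit by (rule bool_closure_least)
qed

end
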